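(* Let $d\ge 1$, $k\ge 1$, $m\ge 1$ and $n>k$ be integers. Let $C\subseteq\mathbb{R}^d$ be a set containing a line segment between two distinct points. Let $f:(\mathbb{R}^d)^k\to\mathbb{R}^m$ be a continuous piecewise linear (CPwL) function, and let $F:(\mathbb{R}^d)^n\to\mathbb{R}^m$ be its $k$-ary Janossy pooling, \[F(\mathbf{x}_1,\dots,\mathbf{x}_n)=\frac{1}{(n-k)!}\sum_{\pi\in S_n} f\big(\mathbf{x}_{\pi(1)},\dots,\mathbf{x}_{\pi(k)}\big).\] Then $F$, viewed as a function on the multiset space $\mathcal{M}_n(C)$, is not injective; that is, there exist two distinct multisets $\{\mathbf{w}_1,\dots,\mathbf{w}_n\}\neq\{\mathbf{w}'_1,\dots,\mathbf{w}'_n\}$ of $n$ elements of $C$ with $F(\mathbf{w}_1,\dots,\mathbf{w}_n)=F(\mathbf{w}'_1,\dots,\mathbf{w}'_n)$.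
   Context: A (closed, convex) polytope in $\mathbb{R}^N$ is a set of the form $\{\mathbf{x}\in\mathbb{R}^N : \mathbf{a}_j\cdot\mathbf{x}+b_j\ge 0,\ j=1,\dots,J\}$ for finitely many $\mathbf{a}_j\in\mathbb{R}^N$, $b_j\in\mathbb{R}$ (not necessarily bounded). A partition of $\mathbb{R}^N$ is a finite collection of polytopes with nonempty interior whose union is $\mathbb{R}^N$ and whose interiors are pairwise disjoint. A function $f:\mathbb{R}^N\to\mathbb{R}^m$ is continuous piecewise linear (CPwL) if it is continuous and there is a partition of $\mathbb{R}^N$ such that the restriction of $f$ to each polytope of the partition is affine. Here $(\mathbb{R}^d)^k$ is identified with $\mathbb{R}^{dk}$. $S_n$ is the symmetric group on $\{1,\dots,n\}$. $\mathcal{M}_n(C)$ denotes the set of multisets of cardinality $n$ (unordered, repetitions allowed) with elements in $C$; a permutation-invariant function on $C^n$ is identified with a function on $\mathcal{M}_n(C)$, and $F$ as defined is permutation invariant. *)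

theory Defs
  imports "HOL-Analysis.Analysis" "HOL-Library.Multiset"
begin

definition is_polytope :: "'a::euclidean_space set \<Rightarrow> bool" where
  "is_polytope Q \<longleftrightarrow> (\<exists>(J::nat) (a::nat \<Rightarrow> 'a) (b::nat \<Rightarrow> real).
      Q = {x. \<forall>j<J. a j \<bullet> x + b j \<ge> 0})"

definition is_polytope_partition :: "'a::euclidean_space set set \<Rightarrow> bool" where
  "is_polytope_partition P \<longleftrightarrow>
     finite P \<and> (\<forall>Q\<in>P. is_polytope Q \<and> interior Q \<noteq> {}) \<and> \<Union>P = UNIV \<and>
     (\<forall>Q1\<in>P. \<forall>Q2\<in>P. Q1 \<noteq> Q2 \<longrightarrow> interior Q1 \<inter> interior Q2 = {})"

definition CPwL :: "('a::euclidean_space \<Rightarrow> 'b::euclidean_space) \<Rightarrow> bool" where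
  "CPwL f \<longleftrightarrow> continuous_on UNIV f \<and>
     (\<exists>P. is_polytope_partition P \<and>
        (\<forall>Q\<in>P. \<exists>g c. linear g \<and> (\<forall>x\<in>Q. f x = g x + c)))"

text \<open>k-ary Janossy pooling. The index set of the n inputs is the type 'k + 'e
  (so n = CARD('k) + CARD('e) > k = CARD('k)); the first k positions are Inl j.\<close>
definition janossy ::
  "(real^'d^'k \<Rightarrow> real^'m) \<Rightarrow> (('k::finite + 'e::finite) \<Rightarrow> real^'d) \<Rightarrow> real^'m" where
  "janossy f x = (1 / fact CARD('e)) *\<^sub>R
     (\<Sum>\<pi>\<in>{\<pi>. \<pi> permutes (UNIV :: ('k + 'e) set)}. f (\<chi> j. x (\<pi> (Inl j))))"

definition point_mset :: "('n::finite \<Rightarrow> 'a) \<Rightarrow> 'a multiset" where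
  "point_mset x = image_mset x (mset_set UNIV)"

end

theory Submission
  imports Defs
begin

text \<open>
  Place the n points on the segment [a, b] at parameters \<open>\<epsilon>^e\<^sub>i + \<mu>\<^sub>i \<epsilon>^M\<close>, with distinct
  exponents \<open>1 \<le> e\<^sub>i < M\<close>. As \<open>\<epsilon> \<rightarrow> 0+\<close>, an affine form evaluated at a k-tuple of these
  points has the sign of its lowest-order term, so the piece of the polytope partition of f
  containing the tuple selected by a permutation \<open>\<pi>\<close> depends only on the relative order of
  the exponents of the selected points, and not on \<open>\<mu>\<close>. On each such class of permutations
  f is one affine map, so switching on \<open>\<mu>\<close> changes the Janossy sum by \<open>\<epsilon>^M\<close> times linear
  images of the class sums of \<open>\<mu>\<close>. After relabelling, these class sums are the coordinates
  of a single linear map from \<open>\<real>^n\<close> to \<open>\<real>^k\<close>, which has a nonzero kernel vector since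
  k < n. For such \<open>\<mu>\<close> the pooled values agree, while the multisets differ because \<open>\<epsilon>^M\<close> is
  smaller than every gap between distinct powers of \<open>\<epsilon>\<close>.
\<close>

section \<open>Weights cancelling on order classes of permutations\<close>

lemma linear_nontrivial_kernel:
  fixes \<Phi> :: "'a::euclidean_space \<Rightarrow> 'b::euclidean_space"
  assumes "linear \<Phi>" and "DIM('b) < DIM('a)"
  obtains x where "x \<noteq> 0" and "\<Phi> x = 0"
proof -
  have "\<not> inj \<Phi>"
  proof
    assume "inj \<Phi>"
    then have "DIM('a) = dim (range \<Phi>)"
      using eucl.dim_image_eq[OF \<open>linear \<Phi>\<close>, of UNIV] by simp
    also have "\<dots> \<le> DIM('b)" by (rule dim_subset_UNIV)
    finally show False using \<open>DIM('b) < DIM('a)\<close> by simp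
  qed
  then show ?thesis using that linear_injective_0[OF \<open>linear \<Phi>\<close>] by blast
qed

lemma ex_order_rank:
  fixes g :: "'k::finite \<Rightarrow> 'a::wellorder"
  assumes "inj g"
  obtains r where "bij_betw r UNIV {..<CARD('k)}" and "\<And>j j'. g j < g j' \<longleftrightarrow> r j < r j'"
proof -
  have "card (range g) = CARD('k)" using assms by (simp add: card_image)
  then obtain h where h: "bij_betw h {..<CARD('k)} (range g)" "strict_mono_on {..<CARD('k)} h"
    using ex_bij_betw_strict_mono_card[of "range g"] by auto
  define r where "r = inv_into {..<CARD('k)} h \<circ> g"
  have "bij_betw r UNIV {..<CARD('k)}"
    unfolding r_def using inj_on_imp_bij_betw[OF assms] bij_betw_inv_into[OF h(1)]
    by (rule bij_betw_trans)
  moreover have "g j = h (r j)" for j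
    unfolding r_def using h(1) by (simp add: bij_betw_inv_into_right)
  ultimately show ?thesis
    using that strict_mono_on_less[OF h(2)] by (metis bij_betwE UNIV_I)
qed

lemma ex_bij_order_iso:
  fixes g0 g1 :: "'k::finite \<Rightarrow> 'a::wellorder"
  assumes "inj g0" and "inj g1"
  obtains \<sigma> where "bij \<sigma>" and "\<And>j j'. g1 j < g1 j' \<longleftrightarrow> g0 (\<sigma> j) < g0 (\<sigma> j')"
proof -
  obtain r0 where r0: "bij_betw r0 UNIV {..<CARD('k)}" "\<And>j j'. g0 j < g0 j' \<longleftrightarrow> r0 j < r0 j'"
    using ex_order_rank[OF assms(1)] by blast
  obtain r1 where r1: "bij_betw r1 UNIV {..<CARD('k)}" "\<And>j j'. g1 j < g1 j' \<longleftrightarrow> r1 j < r1 j'"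
    using ex_order_rank[OF assms(2)] by blast
  define \<sigma> where "\<sigma> = inv_into UNIV r0 \<circ> r1"
  have "bij \<sigma>"
    unfolding \<sigma>_def using r1(1) bij_betw_inv_into[OF r0(1)] by (rule bij_betw_trans)
  moreover have "r0 (\<sigma> j) = r1 j" for j
  proof -
    have "r1 j \<in> range r0" using r0(1) r1(1) by (auto simp: bij_betw_def)
    then show ?thesis unfolding \<sigma>_def by (simp add: f_inv_into_f)
  qed
  ultimately show ?thesis using that r0(2) r1(2) by presburger
qed

definition head_order :: "('k + 'e \<Rightarrow> 'a::ord) \<Rightarrow> ('k + 'e \<Rightarrow> 'k + 'e) \<Rightarrow> 'k \<Rightarrow> 'k \<Rightarrow> bool" where
  "head_order e \<pi> j j' \<longleftrightarrow> e (\<pi> (Inl j)) < e (\<pi> (Inl j'))"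

lemma head_order_comp_map_sum:
  "head_order e (\<pi> \<circ> map_sum \<sigma> id) j j' = head_order e \<pi> (\<sigma> j) (\<sigma> j')"
  by (simp add: head_order_def)

lemma sum_head_order_class_relabel:
  fixes e :: "'k::finite + 'e \<Rightarrow> 'a::wellorder" and x :: "'k + 'e \<Rightarrow> 'b::comm_monoid_add"
  assumes "inj e" and "\<pi>\<^sub>1 permutes UNIV"
  obtains \<sigma> where "\<And>j. (\<Sum>\<pi> | \<pi> permutes UNIV \<and> head_order e \<pi> = head_order e \<pi>\<^sub>1. x (\<pi> (Inl j)))
      = (\<Sum>\<pi> | \<pi> permutes UNIV \<and> head_order e \<pi> = head_order e id. x (\<pi> (Inl (\<sigma> j))))"
proof -
  have "inj (e \<circ> Inl)" "inj (e \<circ> \<pi>\<^sub>1 \<circ> Inl)"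
    using \<open>inj e\<close> permutes_inj[OF assms(2)] by (auto simp: inj_def)
  then obtain \<sigma> where "bij \<sigma>" and \<sigma>: "\<And>j j'. e (\<pi>\<^sub>1 (Inl j)) < e (\<pi>\<^sub>1 (Inl j')) \<longleftrightarrow> e (Inl (\<sigma> j)) < e (Inl (\<sigma> j'))"
    using ex_bij_order_iso[of "e \<circ> Inl" "e \<circ> \<pi>\<^sub>1 \<circ> Inl"] by auto
  define \<tau> :: "'k + 'e \<Rightarrow> 'k + 'e" where "\<tau> = map_sum \<sigma> id"
  define \<tau>' :: "'k + 'e \<Rightarrow> 'k + 'e" where "\<tau>' = map_sum (inv \<sigma>) id"
  have "\<sigma> \<circ> inv \<sigma> = id" "inv \<sigma> \<circ> \<sigma> = id"
    using \<open>bij \<sigma>\<close> by (metis bij_is_surj surj_iff, metis bij_is_inj inj_iff)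
  then have \<tau>\<tau>': "\<tau> \<circ> \<tau>' = id" "\<tau>' \<circ> \<tau> = id"
    unfolding \<tau>_def \<tau>'_def map_sum.comp by (simp_all add: map_sum.id)
  then have perm: "\<tau> permutes UNIV" "\<tau>' permutes UNIV"
    by (auto intro!: bij_imp_permutes o_bij)
  have \<pi>\<^sub>1: "head_order e \<pi>\<^sub>1 j j' = head_order e id (\<sigma> j) (\<sigma> j')" for j j'
    using \<sigma> by (simp add: head_order_def)
  have inv\<sigma>: "\<sigma> (inv \<sigma> j) = j" for j
    using \<open>bij \<sigma>\<close> by (simp add: bij_is_surj surj_f_inv_f)
  show ?thesis
  proof (rule that, rule sum.reindex_bij_witness[where i = "\<lambda>\<pi>. \<pi> \<circ> \<tau>" and j = "\<lambda>\<pi>. \<pi> \<circ> \<tau>'"])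
    fix j and \<pi> :: "'k + 'e \<Rightarrow> 'k + 'e"
    assume \<pi>: "\<pi> \<in> {\<pi>. \<pi> permutes UNIV \<and> head_order e \<pi> = head_order e \<pi>\<^sub>1}"
    show "\<pi> \<circ> \<tau>' \<circ> \<tau> = \<pi>" by (simp add: comp_assoc \<tau>\<tau>')
    have "head_order e (\<pi> \<circ> \<tau>') = head_order e id"
      using \<pi> \<pi>\<^sub>1 inv\<sigma> unfolding \<tau>'_def by (auto simp: head_order_comp_map_sum fun_eq_iff)
    then show "\<pi> \<circ> \<tau>' \<in> {\<pi>. \<pi> permutes UNIV \<and> head_order e \<pi> = head_order e id}"
      using \<pi> perm by (auto intro: permutes_compose)
    show "x ((\<pi> \<circ> \<tau>') (Inl (\<sigma> j))) = x (\<pi> (Inl j))"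
      using \<open>bij \<sigma>\<close> by (simp add: \<tau>'_def bij_is_inj)
  next
    fix \<pi> :: "'k + 'e \<Rightarrow> 'k + 'e"
    assume \<pi>: "\<pi> \<in> {\<pi>. \<pi> permutes UNIV \<and> head_order e \<pi> = head_order e id}"
    show "\<pi> \<circ> \<tau> \<circ> \<tau>' = \<pi>" by (simp add: comp_assoc \<tau>\<tau>')
    have "head_order e (\<pi> \<circ> \<tau>) = head_order e \<pi>\<^sub>1"
      using \<pi> \<pi>\<^sub>1 unfolding \<tau>_def by (auto simp: head_order_comp_map_sum fun_eq_iff)
    then show "\<pi> \<circ> \<tau> \<in> {\<pi>. \<pi> permutes UNIV \<and> head_order e \<pi> = head_order e \<pi>\<^sub>1}"
      using \<pi> perm by (auto intro: permutes_compose)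
  qed
qed

lemma ex_weights_cancelling_on_head_order_classes:
  fixes e :: "'k::finite + 'e::finite \<Rightarrow> 'a::wellorder"
  assumes "inj e"
  obtains \<mu> :: "real^('k + 'e)" where "\<mu> \<noteq> 0" and "\<And>i. \<bar>\<mu> $ i\<bar> \<le> 1"
    and "\<And>\<pi>\<^sub>1 j. \<pi>\<^sub>1 permutes UNIV \<Longrightarrow>
           (\<Sum>\<pi> | \<pi> permutes UNIV \<and> head_order e \<pi> = head_order e \<pi>\<^sub>1. \<mu> $ \<pi> (Inl j)) = 0"
proof -
  \<comment> \<open>One map suffices: after relabelling, every class sum is a coordinate of \<open>\<Phi>\<close>.\<close>
  define \<Phi> :: "real^('k + 'e) \<Rightarrow> real^'k" where
    "\<Phi> x = (\<chi> j. \<Sum>\<pi> | \<pi> permutes UNIV \<and> head_order e \<pi> = head_order e id. x $ \<pi> (Inl j))" for x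
  have "linear \<Phi>"
    by (rule linearI) (simp_all add: \<Phi>_def vec_eq_iff sum.distrib sum_distrib_left)
  moreover have "DIM(real^'k) < DIM(real^('k + 'e))"
    by simp
  ultimately obtain x where "x \<noteq> 0" and "\<Phi> x = 0"
    by (rule linear_nontrivial_kernel)
  define \<mu> where "\<mu> = x /\<^sub>R norm x"
  have "\<mu> \<noteq> 0" using \<open>x \<noteq> 0\<close> by (simp add: \<mu>_def)
  moreover have "\<bar>\<mu> $ i\<bar> \<le> 1" for i
    using component_le_norm_cart[of \<mu> i] \<open>x \<noteq> 0\<close> by (simp add: \<mu>_def)
  moreover have "\<Phi> \<mu> = 0"
    using \<open>\<Phi> x = 0\<close> linear_scale[OF \<open>linear \<Phi>\<close>] by (simp add: \<mu>_def)
  moreover have "(\<Sum>\<pi> | \<pi> permutes UNIV \<and> head_order e \<pi> = head_order e \<pi>\<^sub>1. \<mu> $ \<pi> (Inl j)) = 0"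
    if \<pi>\<^sub>1: "\<pi>\<^sub>1 permutes UNIV" for \<pi>\<^sub>1 j
  proof -
    obtain \<sigma> where "(\<Sum>\<pi> | \<pi> permutes UNIV \<and> head_order e \<pi> = head_order e \<pi>\<^sub>1. \<mu> $ \<pi> (Inl j))
        = (\<Sum>\<pi> | \<pi> permutes UNIV \<and> head_order e \<pi> = head_order e id. \<mu> $ \<pi> (Inl (\<sigma> j)))"
      using sum_head_order_class_relabel[OF \<open>inj e\<close> \<pi>\<^sub>1, of "($) \<mu>"] by blast
    then have "(\<Sum>\<pi> | \<pi> permutes UNIV \<and> head_order e \<pi> = head_order e \<pi>\<^sub>1. \<mu> $ \<pi> (Inl j)) = \<Phi> \<mu> $ \<sigma> j"
      by (simp add: \<Phi>_def)
    then show ?thesis using \<open>\<Phi> \<mu> = 0\<close> by simp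
  qed
  ultimately show ?thesis using that by blast
qed

section \<open>Eventual sign of lacunary polynomials\<close>

text \<open>
  For exponents with \<open>prec j j' \<longleftrightarrow> e j < e j'\<close> and all \<open>e j \<ge> 1\<close>, this says that the
  polynomial \<open>\<beta> + (\<Sum>j\<in>S. \<alpha> j * t ^ e j)\<close> is zero or has a positive lowest-order coefficient;
  only the order of the exponents enters.
\<close>
definition lowest_coeff_nonneg :: "real \<Rightarrow> ('j \<Rightarrow> real) \<Rightarrow> ('j \<Rightarrow> 'j \<Rightarrow> bool) \<Rightarrow> 'j set \<Rightarrow> bool" where
  "lowest_coeff_nonneg \<beta> \<alpha> prec S \<longleftrightarrow>
     (if \<beta> \<noteq> 0 then 0 < \<beta>
      else \<forall>j\<in>S. \<alpha> j \<noteq> 0 \<longrightarrow> (\<forall>j'\<in>S. \<alpha> j' \<noteq> 0 \<longrightarrow> j' \<noteq> j \<longrightarrow> prec j j') \<longrightarrow> 0 < \<alpha> j)"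

lemma eventually_nonneg_power_mult_iff:
  fixes h :: "real \<Rightarrow> real"
  assumes "(h \<longlongrightarrow> L) (at_right 0)" and "L \<noteq> 0"
  shows "eventually (\<lambda>\<epsilon>. 0 \<le> \<epsilon> ^ E * h \<epsilon> \<longleftrightarrow> 0 < L) (at_right 0)"
proof (cases "0 < L")
  case True
  have "eventually (\<lambda>\<epsilon>. 0 < h \<epsilon>) (at_right 0)"
    using order_tendstoD(1)[OF assms(1) True] .
  with eventually_at_right_less[of 0] show ?thesis
    by eventually_elim (simp add: True)
next
  case False
  with \<open>L \<noteq> 0\<close> have "L < 0" by simp
  have "eventually (\<lambda>\<epsilon>. h \<epsilon> < 0) (at_right 0)"
    using order_tendstoD(2)[OF assms(1) \<open>L < 0\<close>] .
  with eventually_at_right_less[of 0] show ?thesis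
    by eventually_elim (simp add: False mult_pos_neg not_le)
qed

lemma eventually_nonneg_iff_lowest_coeff_nonneg:
  fixes \<alpha> c :: "'j \<Rightarrow> real" and e :: "'j \<Rightarrow> nat"
  assumes "finite S" and "inj_on e S" and e: "\<And>j. j \<in> S \<Longrightarrow> 1 \<le> e j \<and> e j < M"
  shows "eventually (\<lambda>\<epsilon>. 0 \<le> \<beta> + (\<Sum>j\<in>S. \<alpha> j * (\<epsilon> ^ e j + c j * \<epsilon> ^ M))
           \<longleftrightarrow> lowest_coeff_nonneg \<beta> \<alpha> (\<lambda>j j'. e j < e j') S) (at_right 0)"
proof -
  define v where "v \<epsilon> = \<beta> + (\<Sum>j\<in>S. \<alpha> j * (\<epsilon> ^ e j + c j * \<epsilon> ^ M))" for \<epsilon> :: real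
  consider "\<beta> \<noteq> 0" | "\<beta> = 0" "\<forall>j\<in>S. \<alpha> j = 0" | "\<beta> = 0" "\<exists>j\<in>S. \<alpha> j \<noteq> 0" by blast
  then have "eventually (\<lambda>\<epsilon>. 0 \<le> v \<epsilon> \<longleftrightarrow> lowest_coeff_nonneg \<beta> \<alpha> (\<lambda>j j'. e j < e j') S) (at_right 0)"
  proof cases
    case 1
    have "(v \<longlongrightarrow> v 0) (at_right 0)"
      unfolding v_def by (intro tendsto_intros)
    moreover have "v 0 = \<beta>"
      using e by (force simp: v_def power_0_left intro!: sum.neutral)
    ultimately have "eventually (\<lambda>\<epsilon>. 0 \<le> \<epsilon> ^ 0 * v \<epsilon> \<longleftrightarrow> 0 < \<beta>) (at_right 0)"
      using 1 by (intro eventually_nonneg_power_mult_iff) simp_all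
    then show ?thesis using 1 by (simp add: lowest_coeff_nonneg_def)
  next
    case 2
    then show ?thesis by (simp add: v_def lowest_coeff_nonneg_def)
  next
    case 3
    then obtain j\<^sub>0 where j\<^sub>0: "j\<^sub>0 \<in> S" "\<alpha> j\<^sub>0 \<noteq> 0"
      and least: "\<And>j. j \<in> S \<Longrightarrow> \<alpha> j \<noteq> 0 \<Longrightarrow> e j\<^sub>0 \<le> e j"
      using ex_has_least_nat[of "\<lambda>j. j \<in> S \<and> \<alpha> j \<noteq> 0" _ e] by blast
    define E where "E = e j\<^sub>0"
    have E_less: "E < e j" if "j \<in> S" "\<alpha> j \<noteq> 0" "j \<noteq> j\<^sub>0" for j
      using least[OF that(1,2)] \<open>inj_on e S\<close> that(1,3) j\<^sub>0(1)
      unfolding E_def inj_on_def by (metis le_neq_implies_less)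
    have "E < M" using e[OF j\<^sub>0(1)] by (simp add: E_def)
    have lowest: "lowest_coeff_nonneg \<beta> \<alpha> (\<lambda>j j'. e j < e j') S \<longleftrightarrow> 0 < \<alpha> j\<^sub>0"
      using 3 j\<^sub>0 E_less least unfolding lowest_coeff_nonneg_def E_def
      by (metis leD)
    define h where "h \<epsilon> = (\<Sum>j\<in>S. \<alpha> j * (\<epsilon> ^ (e j - E) + c j * \<epsilon> ^ (M - E)))" for \<epsilon> :: real
    have "v \<epsilon> = \<epsilon> ^ E * h \<epsilon>" for \<epsilon>
    proof -
      have "\<alpha> j * (\<epsilon> ^ e j + c j * \<epsilon> ^ M) = \<epsilon> ^ E * (\<alpha> j * (\<epsilon> ^ (e j - E) + c j * \<epsilon> ^ (M - E)))"
        if "j \<in> S" for j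
      proof (cases "\<alpha> j = 0")
        case False
        then have "E \<le> e j" using least that by (simp add: E_def)
        with \<open>E < M\<close> show ?thesis
          by (simp add: algebra_simps flip: power_add)
      qed simp
      then have "(\<Sum>j\<in>S. \<alpha> j * (\<epsilon> ^ e j + c j * \<epsilon> ^ M))
          = (\<Sum>j\<in>S. \<epsilon> ^ E * (\<alpha> j * (\<epsilon> ^ (e j - E) + c j * \<epsilon> ^ (M - E))))"
        by (rule sum.cong[OF refl])
      then show ?thesis
        unfolding v_def h_def \<open>\<beta> = 0\<close> by (simp add: sum_distrib_left)
    qed
    moreover have "(h \<longlongrightarrow> \<alpha> j\<^sub>0) (at_right 0)"
    proof -
      have "(h \<longlongrightarrow> h 0) (at_right 0)" unfolding h_def by (intro tendsto_intros)
      moreover have "h 0 = (\<Sum>j\<in>S. if j = j\<^sub>0 then \<alpha> j\<^sub>0 else 0)"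
        unfolding h_def using E_less \<open>E < M\<close> by (intro sum.cong) (force simp: E_def power_0_left)+
      ultimately show ?thesis using j\<^sub>0(1) \<open>finite S\<close> by simp
    qed
    ultimately show ?thesis
      using eventually_nonneg_power_mult_iff[of h "\<alpha> j\<^sub>0" E] j\<^sub>0(2) lowest by simp
  qed
  then show ?thesis by (simp add: v_def)
qed

lemma inner_vec_affine:
  fixes A :: "real^'d^'k"
  shows "A \<bullet> (\<chi> j. a + t j *\<^sub>R v) = (\<Sum>j\<in>UNIV. A $ j \<bullet> a) + (\<Sum>j\<in>UNIV. (A $ j \<bullet> v) * t j)"
proof -
  have "A \<bullet> (\<chi> j. a + t j *\<^sub>R v) = (\<Sum>j\<in>UNIV. A $ j \<bullet> (a + t j *\<^sub>R v))"
    by (simp only: inner_vec_def vec_lambda_beta)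
  also have "\<dots> = (\<Sum>j\<in>UNIV. A $ j \<bullet> a + (A $ j \<bullet> v) * t j)"
    by (simp add: inner_add_right mult.commute)
  finally show ?thesis by (simp add: sum.distrib)
qed

lemma eventually_mem_polytope_iff_lowest_coeffs:
  fixes A :: "nat \<Rightarrow> real^'d^'k" and e :: "'k::finite \<Rightarrow> nat"
  assumes "inj e" and "\<And>j. 1 \<le> e j \<and> e j < M"
  shows "eventually (\<lambda>\<epsilon>. (\<chi> j. a + (\<epsilon> ^ e j + c j * \<epsilon> ^ M) *\<^sub>R v) \<in> {x. \<forall>q<J. 0 \<le> A q \<bullet> x + B q}
           \<longleftrightarrow> (\<forall>q<J. lowest_coeff_nonneg (B q + (\<Sum>j\<in>UNIV. A q $ j \<bullet> a)) (\<lambda>j. A q $ j \<bullet> v)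
                  (\<lambda>j j'. e j < e j') UNIV)) (at_right 0)"
proof -
  have "eventually (\<lambda>\<epsilon>. 0 \<le> A q \<bullet> (\<chi> j. a + (\<epsilon> ^ e j + c j * \<epsilon> ^ M) *\<^sub>R v) + B q
           \<longleftrightarrow> lowest_coeff_nonneg (B q + (\<Sum>j\<in>UNIV. A q $ j \<bullet> a)) (\<lambda>j. A q $ j \<bullet> v)
                  (\<lambda>j j'. e j < e j') UNIV) (at_right 0)" for q
    using eventually_nonneg_iff_lowest_coeff_nonneg[of UNIV e M "B q + (\<Sum>j\<in>UNIV. A q $ j \<bullet> a)"
        "\<lambda>j. A q $ j \<bullet> v" c] assms
    unfolding inner_vec_affine by (simp add: add_ac)
  then have "eventually (\<lambda>\<epsilon>. \<forall>q\<in>{..<J}. 0 \<le> A q \<bullet> (\<chi> j. a + (\<epsilon> ^ e j + c j * \<epsilon> ^ M) *\<^sub>R v) + B q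
           \<longleftrightarrow> lowest_coeff_nonneg (B q + (\<Sum>j\<in>UNIV. A q $ j \<bullet> a)) (\<lambda>j. A q $ j \<bullet> v)
                  (\<lambda>j j'. e j < e j') UNIV) (at_right 0)"
    by (intro eventually_ball_finite) auto
  then show ?thesis
    by eventually_elim auto
qed

lemma eventually_mem_polytope_order_equiv:
  fixes Q :: "(real^'d^'k::finite) set" and e\<^sub>1 e\<^sub>2 :: "'k \<Rightarrow> nat"
  assumes "is_polytope Q" and "inj e\<^sub>1" and "inj e\<^sub>2"
    and "\<And>j. 1 \<le> e\<^sub>1 j \<and> e\<^sub>1 j < M" and "\<And>j. 1 \<le> e\<^sub>2 j \<and> e\<^sub>2 j < M"
    and "(\<lambda>j j'. e\<^sub>1 j < e\<^sub>1 j') = (\<lambda>j j'. e\<^sub>2 j < e\<^sub>2 j')"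
  shows "eventually (\<lambda>\<epsilon>. (\<chi> j. a + (\<epsilon> ^ e\<^sub>1 j + c\<^sub>1 j * \<epsilon> ^ M) *\<^sub>R v) \<in> Q
           \<longleftrightarrow> (\<chi> j. a + (\<epsilon> ^ e\<^sub>2 j + c\<^sub>2 j * \<epsilon> ^ M) *\<^sub>R v) \<in> Q) (at_right 0)"
proof -
  obtain J and A :: "nat \<Rightarrow> real^'d^'k" and B where Q: "Q = {x. \<forall>q<J. 0 \<le> A q \<bullet> x + B q}"
    using \<open>is_polytope Q\<close> unfolding is_polytope_def by blast
  show ?thesis
    using eventually_mem_polytope_iff_lowest_coeffs[OF assms(2,4), of a c\<^sub>1 v J A B]
      eventually_mem_polytope_iff_lowest_coeffs[OF assms(3,5), of a c\<^sub>2 v J A B]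
    unfolding Q assms(6) by eventually_elim simp
qed

section \<open>Points on a segment at distinct powers\<close>

lemma ex_inj_exponents:
  obtains e :: "'n::finite \<Rightarrow> nat" and M where "inj e" and "\<And>i. 1 \<le> e i \<and> e i < M"
proof -
  define e :: "'n \<Rightarrow> nat" where "e i = Suc (to_nat i)" for i
  have "inj e" by (simp add: e_def inj_def)
  moreover have "1 \<le> e i \<and> e i < Suc (Max (range e))" for i
  proof -
    have "e i \<le> Max (range e)" by (rule Max_ge) simp_all
    then show ?thesis by (simp add: e_def[of i])
  qed
  ultimately show ?thesis by (rule that)
qed

lemma power_gap:
  fixes \<epsilon> :: real
  assumes "0 < \<epsilon>" and "\<epsilon> < 1/2" and "p \<noteq> q" and "p < M" and "q < M"
  shows "\<epsilon> ^ M < \<bar>\<epsilon> ^ p - \<epsilon> ^ q\<bar>"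
proof -
  have gap: "\<epsilon> ^ M < \<epsilon> ^ p - \<epsilon> ^ q" if "p < q" "q < M" for p q
  proof -
    have "\<epsilon> ^ q \<le> \<epsilon> ^ Suc p" and "\<epsilon> ^ M \<le> \<epsilon> ^ Suc p"
      using assms(1,2) that by (intro power_decreasing; simp)+
    moreover have "\<epsilon> ^ p * \<epsilon> < \<epsilon> ^ p * (1 - \<epsilon>)"
      using assms(1,2) by (intro mult_strict_left_mono) auto
    ultimately show ?thesis by (simp add: algebra_simps)
  qed
  show ?thesis
    using gap[of p q] gap[of q p] assms(3-5) by (cases "p < q") auto
qed

definition power_points :: "'a::real_vector \<Rightarrow> 'a \<Rightarrow> ('n \<Rightarrow> nat) \<Rightarrow> nat \<Rightarrow> real^'n \<Rightarrow> real \<Rightarrow> 'n \<Rightarrow> 'a"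
  where "power_points a v e M \<mu> \<epsilon> i = a + (\<epsilon> ^ e i + \<mu> $ i * \<epsilon> ^ M) *\<^sub>R v"

lemma range_power_points_subset_closed_segment:
  fixes \<epsilon> :: real
  assumes "0 < \<epsilon>" and "\<epsilon> < 1/2" and "\<And>i. 1 \<le> e i \<and> e i \<le> M" and "\<And>i. \<bar>\<mu> $ i\<bar> \<le> 1"
  shows "range (power_points a (b - a) e M \<mu> \<epsilon>) \<subseteq> closed_segment a b"
proof
  fix p assume "p \<in> range (power_points a (b - a) e M \<mu> \<epsilon>)"
  then obtain i where p: "p = power_points a (b - a) e M \<mu> \<epsilon> i" by blast
  have "\<bar>\<mu> $ i * \<epsilon> ^ M\<bar> \<le> \<epsilon> ^ M"
    using assms(1,4) by (simp add: abs_mult mult_left_le_one_le)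
  moreover have "\<epsilon> ^ M \<le> \<epsilon> ^ e i" and "\<epsilon> ^ e i \<le> \<epsilon> ^ 1"
    using assms(1,2) assms(3)[of i] by (intro power_decreasing; simp)+
  ultimately have "0 \<le> \<epsilon> ^ e i + \<mu> $ i * \<epsilon> ^ M" and "\<epsilon> ^ e i + \<mu> $ i * \<epsilon> ^ M \<le> 1"
    using assms(2) by (auto simp: abs_le_iff)
  then show "p \<in> closed_segment a b"
    unfolding p power_points_def closed_segment_def
    by (auto intro!: exI[of _ "\<epsilon> ^ e i + \<mu> $ i * \<epsilon> ^ M"] simp: algebra_simps)
qed

lemma point_mset_power_points_neq:
  fixes \<mu> :: "real^'n::finite" and \<epsilon> :: real and v :: "'a::real_vector"
  assumes "0 < \<epsilon>" and "\<epsilon> < 1/2" and "inj e" and "\<And>i. e i < M"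
    and "\<mu> \<noteq> 0" and "\<And>i. \<bar>\<mu> $ i\<bar> \<le> 1" and "v \<noteq> 0"
  shows "point_mset (power_points a v e M 0 \<epsilon>) \<noteq> point_mset (power_points a v e M \<mu> \<epsilon>)"
proof
  obtain i\<^sub>0 where "\<mu> $ i\<^sub>0 \<noteq> 0" using \<open>\<mu> \<noteq> 0\<close> by (auto simp: vec_eq_iff)
  assume "point_mset (power_points a v e M 0 \<epsilon>) = point_mset (power_points a v e M \<mu> \<epsilon>)"
  from arg_cong[OF this, of set_mset]
  have "range (power_points a v e M 0 \<epsilon>) = range (power_points a v e M \<mu> \<epsilon>)"
    by (simp add: point_mset_def)
  then have "power_points a v e M \<mu> \<epsilon> i\<^sub>0 \<in> range (power_points a v e M 0 \<epsilon>)"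
    by simp
  then obtain i where "power_points a v e M 0 \<epsilon> i = power_points a v e M \<mu> \<epsilon> i\<^sub>0"
    by auto
  then have eq: "\<epsilon> ^ e i - \<epsilon> ^ e i\<^sub>0 = \<mu> $ i\<^sub>0 * \<epsilon> ^ M"
    using \<open>v \<noteq> 0\<close> by (simp add: power_points_def)
  show False
  proof (cases "i = i\<^sub>0")
    case True
    then show False using eq \<open>\<mu> $ i\<^sub>0 \<noteq> 0\<close> \<open>0 < \<epsilon>\<close> by simp
  next
    case False
    then have "\<epsilon> ^ M < \<bar>\<epsilon> ^ e i - \<epsilon> ^ e i\<^sub>0\<bar>"
      using assms(1-4) by (intro power_gap) (auto simp: inj_eq)
    moreover have "\<bar>\<mu> $ i\<^sub>0 * \<epsilon> ^ M\<bar> \<le> \<epsilon> ^ M"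
      using assms(1,6) by (simp add: abs_mult mult_left_le_one_le)
    ultimately show False using eq by simp
  qed
qed

lemma eventually_head_order_classes_share_pieces:
  fixes P :: "(real^'d^'k) set set" and e :: "'k::finite + 'e::finite \<Rightarrow> nat"
  assumes "finite P" and "\<forall>Q\<in>P. is_polytope Q" and "inj e" and "\<And>i. 1 \<le> e i \<and> e i < M"
  shows "eventually (\<lambda>\<epsilon>. \<forall>Q\<in>P. \<forall>\<pi>\<in>{\<pi>. \<pi> permutes UNIV}. \<forall>\<pi>'\<in>{\<pi>. \<pi> permutes UNIV}.
           head_order e \<pi> = head_order e \<pi>' \<longrightarrow>
           ((\<chi> j. power_points a v e M \<mu> \<epsilon> (\<pi> (Inl j))) \<in> Q
            \<longleftrightarrow> (\<chi> j. power_points a v e M \<mu>' \<epsilon> (\<pi>' (Inl j))) \<in> Q)) (at_right 0)"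
proof -
  have "eventually (\<lambda>\<epsilon>. (\<chi> j. power_points a v e M \<mu> \<epsilon> (\<pi> (Inl j))) \<in> Q
          \<longleftrightarrow> (\<chi> j. power_points a v e M \<mu>' \<epsilon> (\<pi>' (Inl j))) \<in> Q) (at_right 0)"
    if "Q \<in> P" and "\<pi> permutes UNIV" and "\<pi>' permutes UNIV" and "head_order e \<pi> = head_order e \<pi>'"
    for Q \<pi> \<pi>'
  proof -
    have "inj (\<lambda>j. e (\<pi> (Inl j)))" and "inj (\<lambda>j. e (\<pi>' (Inl j)))"
      using inj_compose[OF \<open>inj e\<close> inj_compose[OF permutes_inj inj_Inl]] that(2,3)
      by (simp_all add: comp_def)
    with \<open>head_order e \<pi> = head_order e \<pi>'\<close> show ?thesis
      unfolding power_points_def head_order_def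
      using assms(2,4) \<open>Q \<in> P\<close> by (intro eventually_mem_polytope_order_equiv) auto
  qed
  then show ?thesis
    using assms(1) by (intro eventually_ball_finite ballI) (auto simp: finite_permutations)
qed

section \<open>Sums over affine pieces\<close>

lemma sum_eq_if_classes_share_affine_piece:
  fixes f :: "'a::real_vector \<Rightarrow> 'b::real_vector" and x y :: "'i \<Rightarrow> 'a" and cls :: "'i \<Rightarrow> 'c"
  assumes "finite I"
    and piece: "\<And>i. i \<in> I \<Longrightarrow> \<exists>g c Q. linear g \<and> (\<forall>z\<in>Q. f z = g z + c) \<and>
                   (\<forall>i'\<in>I. cls i' = cls i \<longrightarrow> x i' \<in> Q \<and> y i' \<in> Q)"
    and cancel: "\<And>i. i \<in> I \<Longrightarrow> (\<Sum>i' \<in> {i' \<in> I. cls i' = cls i}. y i' - x i') = 0"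
  shows "(\<Sum>i\<in>I. f (y i)) = (\<Sum>i\<in>I. f (x i))"
proof -
  have "(\<Sum>i' \<in> {i' \<in> I. cls i' = r}. f (y i') - f (x i')) = 0" if "r \<in> cls ` I" for r
  proof -
    obtain i where "i \<in> I" and r: "r = cls i" using \<open>r \<in> cls ` I\<close> by blast
    then obtain g c Q where "linear g" and affine: "\<forall>z\<in>Q. f z = g z + c"
      and in_Q: "\<forall>i'\<in>I. cls i' = cls i \<longrightarrow> x i' \<in> Q \<and> y i' \<in> Q"
      using piece by blast
    have "(\<Sum>i' \<in> {i' \<in> I. cls i' = r}. f (y i') - f (x i'))
        = (\<Sum>i' \<in> {i' \<in> I. cls i' = r}. g (y i' - x i'))"
      using affine in_Q r by (intro sum.cong) (simp_all add: linear_diff[OF \<open>linear g\<close>])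
    also have "\<dots> = g (\<Sum>i' \<in> {i' \<in> I. cls i' = r}. y i' - x i')"
      by (simp add: linear_sum[OF \<open>linear g\<close>])
    also have "\<dots> = 0"
      using cancel[OF \<open>i \<in> I\<close>] r linear_0[OF \<open>linear g\<close>] by simp
    finally show ?thesis .
  qed
  then have "(\<Sum>r\<in>cls ` I. \<Sum>i' \<in> {i' \<in> I. cls i' = r}. f (y i') - f (x i')) = 0"
    by (blast intro: sum.neutral)
  then have "(\<Sum>i\<in>I. f (y i) - f (x i)) = 0"
    using sum.group[OF \<open>finite I\<close> finite_imageI[OF \<open>finite I\<close>] subset_refl,
        where g = cls and h = "\<lambda>i. f (y i) - f (x i)"] by simp
  then show ?thesis by (simp add: sum_subtractf)
qed

lemma janossy_eq_if_classes_share_affine_piece: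
  fixes f :: "real^'d^'k \<Rightarrow> real^'m" and x y :: "'k::finite + 'e::finite \<Rightarrow> real^'d"
    and cls :: "('k + 'e \<Rightarrow> 'k + 'e) \<Rightarrow> 'c"
  assumes piece: "\<And>\<pi>. \<pi> permutes UNIV \<Longrightarrow> \<exists>g c Q. linear g \<and> (\<forall>z\<in>Q. f z = g z + c) \<and>
        (\<forall>\<pi>'. \<pi>' permutes UNIV \<longrightarrow> cls \<pi>' = cls \<pi> \<longrightarrow>
           (\<chi> j. x (\<pi>' (Inl j))) \<in> Q \<and> (\<chi> j. y (\<pi>' (Inl j))) \<in> Q)"
    and cancel: "\<And>\<pi> j. \<pi> permutes UNIV \<Longrightarrow>
        (\<Sum>\<pi>' | \<pi>' permutes UNIV \<and> cls \<pi>' = cls \<pi>. y (\<pi>' (Inl j)) - x (\<pi>' (Inl j))) = 0"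
  shows "janossy f x = janossy f y"
proof -
  have "(\<Sum>\<pi> | \<pi> permutes UNIV. f (\<chi> j. y (\<pi> (Inl j)))) = (\<Sum>\<pi> | \<pi> permutes UNIV. f (\<chi> j. x (\<pi> (Inl j))))"
    by (rule sum_eq_if_classes_share_affine_piece[where cls = cls])
      (use piece cancel finite_permutations in \<open>auto simp: vec_eq_iff\<close>)
  then show ?thesis by (simp add: janossy_def)
qed

lemma eventually_janossy_power_points_eq:
  fixes f :: "real^'d^'k \<Rightarrow> real^'m" and e :: "'k::finite + 'e::finite \<Rightarrow> nat"
    and \<mu> :: "real^('k + 'e)"
  assumes "CPwL f" and "inj e" and "\<And>i. 1 \<le> e i \<and> e i < M"
    and cancel: "\<And>\<pi>\<^sub>1 j. \<pi>\<^sub>1 permutes UNIV \<Longrightarrow>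
           (\<Sum>\<pi> | \<pi> permutes UNIV \<and> head_order e \<pi> = head_order e \<pi>\<^sub>1. \<mu> $ \<pi> (Inl j)) = 0"
  shows "eventually (\<lambda>\<epsilon>. janossy f (power_points a v e M 0 \<epsilon>) = janossy f (power_points a v e M \<mu> \<epsilon>))
           (at_right 0)"
proof -
  obtain P where "is_polytope_partition P"
    and affine: "\<forall>Q\<in>P. \<exists>g c. linear g \<and> (\<forall>x\<in>Q. f x = g x + c)"
    using \<open>CPwL f\<close> unfolding CPwL_def by blast
  then have "finite P" and "\<forall>Q\<in>P. is_polytope Q" and cover: "\<Union>P = UNIV"
    by (auto simp: is_polytope_partition_def)
  define X where "X \<nu> \<epsilon> \<pi> = (\<chi> j. power_points a v e M \<nu> \<epsilon> (\<pi> (Inl j)))"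
    for \<nu> \<epsilon> and \<pi> :: "'k + 'e \<Rightarrow> 'k + 'e"
  have "eventually (\<lambda>\<epsilon>. \<forall>Q\<in>P. \<forall>\<pi>\<in>{\<pi>. \<pi> permutes UNIV}. \<forall>\<pi>'\<in>{\<pi>. \<pi> permutes UNIV}.
      head_order e \<pi> = head_order e \<pi>' \<longrightarrow> (X \<nu> \<epsilon> \<pi> \<in> Q \<longleftrightarrow> X 0 \<epsilon> \<pi>' \<in> Q)) (at_right 0)" for \<nu>
    unfolding X_def using assms(2,3) \<open>finite P\<close> \<open>\<forall>Q\<in>P. is_polytope Q\<close>
    by (intro eventually_head_order_classes_share_pieces)
  from this[of 0] this[of \<mu>] show ?thesis
  proof eventually_elim
    case (elim \<epsilon>)
    show ?case
    proof (rule janossy_eq_if_classes_share_affine_piece[where cls = "head_order e"])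
      fix \<pi> :: "'k + 'e \<Rightarrow> 'k + 'e"
      assume "\<pi> permutes UNIV"
      obtain Q where "Q \<in> P" and "X 0 \<epsilon> \<pi> \<in> Q" using cover by blast
      moreover obtain g c where "linear g" and "\<forall>z\<in>Q. f z = g z + c" using affine \<open>Q \<in> P\<close> by blast
      moreover have "X \<nu> \<epsilon> \<pi>' \<in> Q"
        if "\<nu> \<in> {0, \<mu>}" and "\<pi>' permutes UNIV" and "head_order e \<pi>' = head_order e \<pi>" for \<nu> \<pi>'
        using elim(1)[rule_format, OF \<open>Q \<in> P\<close>, of \<pi>' \<pi>] elim(2)[rule_format, OF \<open>Q \<in> P\<close>, of \<pi>' \<pi>]
          that \<open>\<pi> permutes UNIV\<close> \<open>X 0 \<epsilon> \<pi> \<in> Q\<close> by auto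
      ultimately show "\<exists>g c Q. linear g \<and> (\<forall>z\<in>Q. f z = g z + c) \<and> (\<forall>\<pi>'. \<pi>' permutes UNIV \<longrightarrow>
          head_order e \<pi>' = head_order e \<pi> \<longrightarrow>
          (\<chi> j. power_points a v e M 0 \<epsilon> (\<pi>' (Inl j))) \<in> Q \<and> (\<chi> j. power_points a v e M \<mu> \<epsilon> (\<pi>' (Inl j))) \<in> Q)"
        unfolding X_def by blast
    next
      fix \<pi> :: "'k + 'e \<Rightarrow> 'k + 'e" and j
      assume "\<pi> permutes UNIV"
      have "power_points a v e M \<mu> \<epsilon> i - power_points a v e M 0 \<epsilon> i = (\<mu> $ i * \<epsilon> ^ M) *\<^sub>R v" for i
        by (simp add: power_points_def algebra_simps)
      then have "(\<Sum>\<pi>' | \<pi>' permutes UNIV \<and> head_order e \<pi>' = head_order e \<pi>.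
          power_points a v e M \<mu> \<epsilon> (\<pi>' (Inl j)) - power_points a v e M 0 \<epsilon> (\<pi>' (Inl j)))
        = ((\<Sum>\<pi>' | \<pi>' permutes UNIV \<and> head_order e \<pi>' = head_order e \<pi>. \<mu> $ \<pi>' (Inl j)) * \<epsilon> ^ M) *\<^sub>R v"
        by (simp add: scaleR_sum_left sum_distrib_right)
      also have "\<dots> = 0"
        using cancel[OF \<open>\<pi> permutes UNIV\<close>] by simp
      finally show "(\<Sum>\<pi>' | \<pi>' permutes UNIV \<and> head_order e \<pi>' = head_order e \<pi>.
          power_points a v e M \<mu> \<epsilon> (\<pi>' (Inl j)) - power_points a v e M 0 \<epsilon> (\<pi>' (Inl j))) = 0" .
    qed
  qed
qed

theorem theorem3p1:
  fixes C :: "(real^'d) set"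
    and f :: "real^'d^'k \<Rightarrow> real^'m"
  assumes seg: "\<exists>a b. a \<noteq> b \<and> closed_segment a b \<subseteq> C"
    and cpwl: "CPwL f"
  shows "\<exists>(w :: ('k::finite + 'e::finite) \<Rightarrow> real^'d) (w' :: ('k + 'e) \<Rightarrow> real^'d).
           range w \<subseteq> C \<and> range w' \<subseteq> C \<and>
           point_mset w \<noteq> point_mset w' \<and>
           janossy f w = janossy f w'"
proof -
  obtain a b where "a \<noteq> b" and "closed_segment a b \<subseteq> C" using seg by blast
  obtain e :: "'k + 'e \<Rightarrow> nat" and M where "inj e" and e: "\<And>i. 1 \<le> e i \<and> e i < M"
    using ex_inj_exponents by blast
  obtain \<mu> :: "real^('k + 'e)" where "\<mu> \<noteq> 0" and "\<And>i. \<bar>\<mu> $ i\<bar> \<le> 1"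
    and cancel: "\<And>\<pi>\<^sub>1 j. \<pi>\<^sub>1 permutes UNIV \<Longrightarrow>
           (\<Sum>\<pi> | \<pi> permutes UNIV \<and> head_order e \<pi> = head_order e \<pi>\<^sub>1. \<mu> $ \<pi> (Inl j)) = 0"
    using ex_weights_cancelling_on_head_order_classes[OF \<open>inj e\<close>] by blast
  define w where "w \<nu> \<epsilon> = power_points a (b - a) e M \<nu> \<epsilon>" for \<nu> \<epsilon>
  have "eventually (\<lambda>\<epsilon>::real. 0 < \<epsilon> \<and> \<epsilon> < 1/2) (at_right 0)"
    by (rule eventually_at_rightI[of 0 "1/2"]) auto
  moreover have "eventually (\<lambda>\<epsilon>. janossy f (w 0 \<epsilon>) = janossy f (w \<mu> \<epsilon>)) (at_right 0)"
    unfolding w_def using cpwl \<open>inj e\<close> e cancel by (rule eventually_janossy_power_points_eq)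
  ultimately have "eventually (\<lambda>\<epsilon>. (0 < \<epsilon> \<and> \<epsilon> < 1/2) \<and> janossy f (w 0 \<epsilon>) = janossy f (w \<mu> \<epsilon>))
      (at_right 0)"
    by (rule eventually_conj)
  from eventually_happens'[OF trivial_limit_at_right_real this]
  obtain \<epsilon> where "0 < \<epsilon>" and "\<epsilon> < 1/2" and "janossy f (w 0 \<epsilon>) = janossy f (w \<mu> \<epsilon>)"
    by blast
  moreover have "range (w \<nu> \<epsilon>) \<subseteq> C" if "\<nu> \<in> {0, \<mu>}" for \<nu>
  proof -
    have "\<bar>\<nu> $ i\<bar> \<le> 1" and "1 \<le> e i \<and> e i \<le> M" for i
      using that \<open>\<And>i. \<bar>\<mu> $ i\<bar> \<le> 1\<close> e[of i] by auto
    then show ?thesis unfolding w_def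
      using range_power_points_subset_closed_segment[OF \<open>0 < \<epsilon>\<close> \<open>\<epsilon> < 1/2\<close>] \<open>closed_segment a b \<subseteq> C\<close>
      by blast
  qed
  moreover have "point_mset (w 0 \<epsilon>) \<noteq> point_mset (w \<mu> \<epsilon>)"
    unfolding w_def using \<open>0 < \<epsilon>\<close> \<open>\<epsilon> < 1/2\<close> \<open>inj e\<close> e \<open>\<mu> \<noteq> 0\<close> \<open>\<And>i. \<bar>\<mu> $ i\<bar> \<le> 1\<close> \<open>a \<noteq> b\<close>
    by (intro point_mset_power_points_neq) auto
  ultimately show ?thesis by blast
qed

end
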